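(* Let $(X,d)$ be a complete Alexandrov space, $G\subset X$ a closed, geodesically convex set with $(G,d)$ separable, $K>0$, and $\mu\in\mathfrak P(F_K(G))$. Let $g(x):=\int_{F_K(G)}f(x)\,d\mu(f)$ and let $\mathbb E\mu\in G$ denote the unique minimizer of $g$ over $G$. Then for all $x\in G$, \[ d(x,\mathbb E\mu)^2\le\frac2K\int_{F_K(G)}\big[f(x)-f(\mathbb E\mu)\big]\,d\mu(f).\]
   Context: Minimal geodesics $x\#_ty$ satisfy $d(x\#_sy,x\#_ty)=|s-t|d(x,y)$. A function $h$ is $K$-convex if $h(x\#_ty)\le(1-t)h(x)+th(y)-\frac K2t(1-t)d(x,y)^2$ along all minimal geodesics. $F_K(G)$ is the set of lower semi-continuous $K$-convex functions $G\to(-\infty,\infty]$ not identically $+\infty$, equipped with the $\sigma$-field $\mathcal E$ generated by the sets $\{h:\inf_Oh<\alpha\}$ for $O\subseteq G$ open and $\alpha\in\mathbb R$ (equivalently, the Effros $\sigma$-field on epigraphs). $\mathfrak P(F_K(G))$ is the set of complete probability measures $\mu$ on $(F_K(G),\mathcal E)$ such that $g(x)=\int f(x)\,d\mu(f)$ is a lower semi-continuous, $(-\infty,+\infty]$-valued, $K$-convex function on $G$ that is finite at some point of $G$. *)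

theory Defs
  imports "HOL-Probability.Probability"
begin

definition min_geodesic :: "(real \<Rightarrow> 'a::metric_space) \<Rightarrow> 'a \<Rightarrow> 'a \<Rightarrow> bool" where
  "min_geodesic \<gamma> x y \<longleftrightarrow> \<gamma> 0 = x \<and> \<gamma> 1 = y \<and>
     (\<forall>s\<in>{0..1}. \<forall>t\<in>{0..1}. dist (\<gamma> s) (\<gamma> t) = \<bar>s - t\<bar> * dist x y)"

text \<open>Alexandrov space of nonpositive curvature (global NPC / CAT(0)):
  geodesic space satisfying the NPC comparison inequality along all minimal geodesics.\<close>
definition alexandrov_space :: "'a::metric_space itself \<Rightarrow> bool" where
  "alexandrov_space _ \<longleftrightarrow>
     (\<forall>x y::'a. \<exists>\<gamma>. min_geodesic \<gamma> x y) \<and>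
     (\<forall>x y z::'a. \<forall>\<gamma>. min_geodesic \<gamma> x y \<longrightarrow> (\<forall>t\<in>{0..1}.
        (dist z (\<gamma> t))\<^sup>2 \<le> (1 - t) * (dist z x)\<^sup>2 + t * (dist z y)\<^sup>2 - t * (1 - t) * (dist x y)\<^sup>2))"

definition geodesically_convex :: "'a::metric_space set \<Rightarrow> bool" where
  "geodesically_convex G \<longleftrightarrow>
     (\<forall>x\<in>G. \<forall>y\<in>G. \<forall>\<gamma>. min_geodesic \<gamma> x y \<longrightarrow> \<gamma> ` {0..1} \<subseteq> G)"

definition separable_set :: "'a::metric_space set \<Rightarrow> bool" where
  "separable_set G \<longleftrightarrow> (\<exists>D. countable D \<and> D \<subseteq> G \<and> G \<subseteq> closure D)"

definition K_convex_on :: "real \<Rightarrow> 'a::metric_space set \<Rightarrow> ('a \<Rightarrow> ereal) \<Rightarrow> bool" where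
  "K_convex_on K G h \<longleftrightarrow>
     (\<forall>x\<in>G. \<forall>y\<in>G. \<forall>\<gamma>. min_geodesic \<gamma> x y \<longrightarrow> (\<forall>t\<in>{0..1}.
        h (\<gamma> t) \<le> ereal (1 - t) * h x + ereal t * h y - ereal (K / 2 * t * (1 - t) * (dist x y)\<^sup>2)))"

text \<open>Lower semicontinuity on G (w.r.t. the subspace topology; sequential, as G is metric).\<close>
definition lsc_on :: "'a::metric_space set \<Rightarrow> ('a \<Rightarrow> ereal) \<Rightarrow> bool" where
  "lsc_on G h \<longleftrightarrow>
     (\<forall>x\<in>G. \<forall>xs. (\<forall>n. xs n \<in> G) \<longrightarrow> xs \<longlonglongrightarrow> x \<longrightarrow> h x \<le> liminf (\<lambda>n. h (xs n)))"

text \<open>F_K(G): lsc K-convex functions G \<rightarrow> (-\<infinity>,\<infinity>], not identically \<infinity>.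
  Functions are represented on the whole space with the convention value \<infinity> outside G.\<close>
definition FK :: "real \<Rightarrow> 'a::metric_space set \<Rightarrow> ('a \<Rightarrow> ereal) set" where
  "FK K G = {h. (\<forall>x\<in>G. h x \<noteq> -\<infinity>) \<and> (\<forall>x. x \<notin> G \<longrightarrow> h x = \<infinity>) \<and>
               lsc_on G h \<and> K_convex_on K G h \<and> (\<exists>x\<in>G. h x \<noteq> \<infinity>)}"

definition FK_sets :: "real \<Rightarrow> 'a::metric_space set \<Rightarrow> ('a \<Rightarrow> ereal) set set" where
  "FK_sets K G = sigma_sets (FK K G)
     {{h \<in> FK K G. (INF x\<in>U. h x) < ereal \<alpha>} | U \<alpha>. openin (top_of_set G) U}"

definition eint :: "'b measure \<Rightarrow> ('b \<Rightarrow> ereal) \<Rightarrow> ereal" where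
  "eint M h = enn2ereal (\<integral>\<^sup>+ w. e2ennreal (h w) \<partial>M) - enn2ereal (\<integral>\<^sup>+ w. e2ennreal (- h w) \<partial>M)"

definition mean_fun :: "('a \<Rightarrow> ereal) measure \<Rightarrow> 'a \<Rightarrow> ereal" where
  "mean_fun \<mu> x = eint \<mu> (\<lambda>f. f x)"

definition PFK :: "real \<Rightarrow> 'a::metric_space set \<Rightarrow> ('a \<Rightarrow> ereal) measure set" where
  "PFK K G = {\<mu>. (\<exists>\<nu>. space \<nu> = FK K G \<and> sets \<nu> = FK_sets K G \<and> \<mu> = completion \<nu>) \<and>
       prob_space \<mu> \<and>
       (\<forall>x\<in>G. (\<integral>\<^sup>+ f. e2ennreal (- f x) \<partial>\<mu>) < \<infinity>) \<and>
       lsc_on G (mean_fun \<mu>) \<and> K_convex_on K G (mean_fun \<mu>) \<and>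
       (\<exists>x\<in>G. mean_fun \<mu> x \<noteq> \<infinity>)}"

end

theory Submission
  imports Defs
begin

text \<open>Let \<open>g\<close> be the mean function and \<open>\<gamma>\<close> the geodesic from the minimizer \<open>m\<close> to \<open>x\<close>.
  By \<open>K\<close>-convexity and minimality,
  \<open>g m \<le> g (\<gamma> t) \<le> (1 - t) g m + t g x - K/2 t (1 - t) d(x,m)\<^sup>2\<close>, so
  \<open>K/2 (1 - t) d(x,m)\<^sup>2 \<le> g x - g m\<close> for \<open>0 < t \<le> 1\<close>; letting \<open>t \<rightarrow> 0\<close> gives the bound.
  It remains to see that \<open>\<integral>(f x - f m) d\<mu> = g x - g m\<close>, which holds because \<open>f m\<close> is
  \<open>\<mu>\<close>-integrable and the negative part of \<open>f x\<close> has finite integral.\<close>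

lemma lsc_on_le_if_INF_balls_less:
  fixes f :: "'a::metric_space \<Rightarrow> ereal"
  assumes lsc: "lsc_on G f" and "x \<in> G"
    and less: "\<And>n. (INF z\<in>ball x (inverse (real (Suc n))) \<inter> G. f z) < ereal (\<beta> + inverse (real (Suc n)))"
  shows "f x \<le> ereal \<beta>"
proof -
  have "\<forall>n. \<exists>z. z \<in> ball x (inverse (real (Suc n))) \<inter> G \<and>
      f z < ereal (\<beta> + inverse (real (Suc n)))"
    using less by (simp only: INF_less_iff Bex_def) blast
  from choice[OF this] obtain xs where "\<forall>n. xs n \<in> ball x (inverse (real (Suc n))) \<inter> G \<and>
      f (xs n) < ereal (\<beta> + inverse (real (Suc n)))"
    by blast
  then have xs: "\<And>n. xs n \<in> ball x (inverse (real (Suc n))) \<inter> G"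
    and f_xs: "\<And>n. f (xs n) < ereal (\<beta> + inverse (real (Suc n)))"
    by auto
  have "(\<lambda>n. dist (xs n) x) \<longlonglongrightarrow> 0"
  proof (rule tendsto_sandwich[of "\<lambda>_. 0" _ _ "\<lambda>n. inverse (real (Suc n))"])
    have "dist (xs n) x \<le> inverse (real (Suc n))" for n
      using xs[of n] by (simp add: dist_commute)
    then show "\<forall>\<^sub>F n in sequentially. dist (xs n) x \<le> inverse (real (Suc n))"
      by (simp add: always_eventually)
  qed (simp, simp, rule LIMSEQ_inverse_real_of_nat)
  then have "xs \<longlonglongrightarrow> x" by (rule tendsto_dist_iff[THEN iffD2])
  moreover have "\<forall>n. xs n \<in> G" using xs by blast
  ultimately have "f x \<le> liminf (\<lambda>n. f (xs n))"
    using lsc \<open>x \<in> G\<close> unfolding lsc_on_def by blast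
  also have "\<dots> \<le> liminf (\<lambda>n. ereal (\<beta> + inverse (real (Suc n))))"
    using f_xs by (intro Liminf_mono always_eventually allI less_imp_le)
  also have "\<dots> = ereal \<beta>"
  proof (intro lim_imp_Liminf)
    have "(\<lambda>n. \<beta> + inverse (real (Suc n))) \<longlonglongrightarrow> \<beta> + 0"
      by (intro tendsto_add tendsto_const LIMSEQ_inverse_real_of_nat)
    then show "(\<lambda>n. ereal (\<beta> + inverse (real (Suc n)))) \<longlonglongrightarrow> ereal \<beta>"
      by (simp add: tendsto_ereal)
  qed simp
  finally show ?thesis .
qed

lemma measurable_eval_FK:
  fixes G :: "'a::metric_space set"
  assumes x: "x \<in> G" and space: "space \<nu> = FK K G" and sets: "sets \<nu> = FK_sets K G"
  shows "(\<lambda>f. f x) \<in> borel_measurable \<nu>"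
proof (rule borel_measurableI_le)
  fix y :: ereal
  show "{f \<in> space \<nu>. f x \<le> y} \<in> sets \<nu>"
  proof (cases y)
    case PInf
    then have "{f \<in> space \<nu>. f x \<le> y} = space \<nu>" by simp
    then show ?thesis by simp
  next
    case MInf
    then have "{f \<in> space \<nu>. f x \<le> y} = {}" using x space by (auto simp: FK_def)
    then show ?thesis by (metis sets.empty_sets)
  next
    case (real \<beta>)
    txt \<open>By lower semicontinuity, \<open>f x \<le> \<beta>\<close> iff \<open>f\<close> dips below \<open>\<beta> + 1/(n+1)\<close> on every
      ball of radius \<open>1/(n+1)\<close> around \<open>x\<close>; these are generating sets of \<open>FK_sets\<close>.\<close>
    define U where "U n = ball x (inverse (real (Suc n))) \<inter> G" for n
    define S where "S n = {h \<in> FK K G. (INF z\<in>U n. h z) < ereal (\<beta> + inverse (real (Suc n)))}" for n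
    have "f \<in> S n" if "f \<in> FK K G" "f x \<le> ereal \<beta>" for f n
    proof -
      have "(INF z\<in>U n. f z) \<le> f x" using x by (intro INF_lower) (simp add: U_def)
      also have "\<dots> < ereal (\<beta> + inverse (real (Suc n)))" using that(2) by (simp add: le_less_trans)
      finally show ?thesis using that(1) by (simp add: S_def)
    qed
    moreover have "f x \<le> ereal \<beta>" if "\<And>n. f \<in> S n" for f
      using that lsc_on_le_if_INF_balls_less[of G f x \<beta>] x by (auto simp: S_def U_def FK_def)
    ultimately have "{f \<in> space \<nu>. f x \<le> y} = (\<Inter>n. S n)"
      using space real by (auto simp: S_def)
    moreover have "S n \<in> sets \<nu>" for n
    proof -
      have "openin (top_of_set G) (U n)"
        unfolding U_def by (metis Int_commute open_ball openin_open_Int)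
      then show ?thesis unfolding sets FK_sets_def S_def by (intro sigma_sets.Basic) blast
    qed
    ultimately show ?thesis by auto
  qed
qed

lemma e2ennreal_parts_of_diff_eq:
  fixes a b :: ereal
  assumes "a \<noteq> -\<infinity>" "\<bar>b\<bar> \<noteq> \<infinity>"
  shows "e2ennreal (a - b) + e2ennreal (- a) + e2ennreal b =
         e2ennreal (- (a - b)) + e2ennreal a + e2ennreal (- b)"
  using assms by (cases a; cases b) (auto simp: ennreal_plus_if)

lemma e2ennreal_neg_diff_le:
  fixes a b :: ereal
  assumes "a \<noteq> -\<infinity>" "\<bar>b\<bar> \<noteq> \<infinity>"
  shows "e2ennreal (- (a - b)) \<le> e2ennreal b + e2ennreal (- a)"
  using assms by (cases a; cases b) (auto simp: ennreal_plus_if ennreal_le_iff2)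

lemma eint_neq_MInf:
  assumes "(\<integral>\<^sup>+ w. e2ennreal (- h w) \<partial>M) < \<infinity>"
  shows "eint M h \<noteq> -\<infinity>"
  using assms by (cases "\<integral>\<^sup>+ w. e2ennreal (h w) \<partial>M"; cases "\<integral>\<^sup>+ w. e2ennreal (- h w) \<partial>M")
    (auto simp: eint_def)

lemma eint_neq_PInf_iff:
  assumes "(\<integral>\<^sup>+ w. e2ennreal (- h w) \<partial>M) < \<infinity>"
  shows "eint M h \<noteq> \<infinity> \<longleftrightarrow> (\<integral>\<^sup>+ w. e2ennreal (h w) \<partial>M) < \<infinity>"
  using assms by (cases "\<integral>\<^sup>+ w. e2ennreal (h w) \<partial>M"; cases "\<integral>\<^sup>+ w. e2ennreal (- h w) \<partial>M")
    (auto simp: eint_def)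

lemma eint_diff:
  fixes u v :: "'b \<Rightarrow> ereal"
  assumes [measurable]: "u \<in> borel_measurable M" "v \<in> borel_measurable M"
    and neg_u: "(\<integral>\<^sup>+ w. e2ennreal (- u w) \<partial>M) < \<infinity>"
    and pos_v: "(\<integral>\<^sup>+ w. e2ennreal (v w) \<partial>M) < \<infinity>"
    and neg_v: "(\<integral>\<^sup>+ w. e2ennreal (- v w) \<partial>M) < \<infinity>"
  shows "eint M (\<lambda>w. u w - v w) = eint M u - eint M v"
proof -
  define Pu Nu Pv Nv Dp Dm where
    "Pu = (\<integral>\<^sup>+ w. e2ennreal (u w) \<partial>M)" and "Nu = (\<integral>\<^sup>+ w. e2ennreal (- u w) \<partial>M)" and
    "Pv = (\<integral>\<^sup>+ w. e2ennreal (v w) \<partial>M)" and "Nv = (\<integral>\<^sup>+ w. e2ennreal (- v w) \<partial>M)" and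
    "Dp = (\<integral>\<^sup>+ w. e2ennreal (u w - v w) \<partial>M)" and "Dm = (\<integral>\<^sup>+ w. e2ennreal (- (u w - v w)) \<partial>M)"
  have "AE w in M. e2ennreal (- u w) \<noteq> \<infinity>" "AE w in M. e2ennreal (v w) \<noteq> \<infinity>"
    "AE w in M. e2ennreal (- v w) \<noteq> \<infinity>"
    using neg_u pos_v neg_v by (intro nn_integral_PInf_AE; simp)+
  then have AE: "AE w in M. u w \<noteq> -\<infinity> \<and> \<bar>v w\<bar> \<noteq> \<infinity>"
    by eventually_elim (auto simp: ereal_uminus_eq_reorder)
  txt \<open>The parts balance pointwise; integrating the balance in \<open>ennreal\<close> avoids any
    subtraction of possibly infinite integrals.\<close>
  have "Dp + Nu + Pv = (\<integral>\<^sup>+ w. e2ennreal (u w - v w) + e2ennreal (- u w) + e2ennreal (v w) \<partial>M)"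
    unfolding Dp_def Nu_def Pv_def by (simp add: nn_integral_add)
  also have "\<dots> = (\<integral>\<^sup>+ w. e2ennreal (- (u w - v w)) + e2ennreal (u w) + e2ennreal (- v w) \<partial>M)"
    by (intro nn_integral_cong_AE eventually_mono[OF AE]) (simp add: e2ennreal_parts_of_diff_eq)
  also have "\<dots> = Dm + Pu + Nv"
    unfolding Dm_def Pu_def Nv_def by (simp add: nn_integral_add)
  finally have parts: "Dp + Nu + Pv = Dm + Pu + Nv" .
  have "Dm \<le> (\<integral>\<^sup>+ w. e2ennreal (v w) + e2ennreal (- u w) \<partial>M)"
    unfolding Dm_def
    by (intro nn_integral_mono_AE eventually_mono[OF AE]) (simp add: e2ennreal_neg_diff_le)
  also have "\<dots> = Pv + Nu" unfolding Pv_def Nu_def by (simp add: nn_integral_add)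
  also have "\<dots> < \<infinity>" using neg_u pos_v by (simp add: Nu_def Pv_def)
  finally have "Dm < \<infinity>" .
  then obtain nu pv nv dm where reals: "Nu = ennreal nu" "Pv = ennreal pv" "Nv = ennreal nv"
    "Dm = ennreal dm" "0 \<le> nu" "0 \<le> pv" "0 \<le> nv" "0 \<le> dm"
    using neg_u pos_v neg_v by (auto simp: Nu_def Pv_def Nv_def less_top_ennreal)
  have "eint M (\<lambda>w. u w - v w) = enn2ereal Dp - ereal dm" "eint M u = enn2ereal Pu - ereal nu"
    "eint M v = ereal (pv - nv)"
    unfolding eint_def Dp_def[symmetric] Dm_def[symmetric] Pu_def[symmetric] Nu_def[symmetric]
      Pv_def[symmetric] Nv_def[symmetric]
    by (simp_all add: reals)
  moreover have "Dp = \<infinity> \<longleftrightarrow> Pu = \<infinity>"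
    using parts reals by (cases Pu; cases Dp) (auto simp flip: ennreal_plus)
  moreover have "enn2ereal Dp - dm = enn2ereal Pu - nu - (pv - nv)" if "Pu \<noteq> \<infinity>" "Dp \<noteq> \<infinity>"
    using that parts reals by (cases Pu; cases Dp) (auto simp flip: ennreal_plus)
  ultimately show ?thesis by (cases "Pu = \<infinity>") auto
qed

lemma K_convex_ineq_at_min_imp_le:
  fixes K D a b :: real
  assumes K: "K > 0"
    and ineq: "\<And>t. 0 \<le> t \<Longrightarrow> t \<le> 1 \<Longrightarrow> a \<le> (1 - t) * a + t * b - K / 2 * t * (1 - t) * D"
  shows "D \<le> 2 / K * (b - a)"
proof -
  have "K / 2 * (1 - t) * D \<le> b - a" if "0 < t" "t < 1" for t
  proof -
    have "0 \<le> t * (b - a - K / 2 * (1 - t) * D)"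
      using ineq[of t] that by (simp add: algebra_simps)
    then show ?thesis using that by (simp add: zero_le_mult_iff)
  qed
  then have "eventually (\<lambda>t. K / 2 * (1 - t) * D \<le> b - a) (at_right 0)"
    by (intro eventually_at_rightI[of 0 1]) auto
  moreover have "((\<lambda>t. K / 2 * (1 - t) * D) \<longlongrightarrow> K / 2 * (1 - 0) * D) (at_right 0)"
    by (intro tendsto_intros)
  ultimately have "K / 2 * (1 - 0) * D \<le> b - a"
    by (intro tendsto_upperbound) auto
  then show ?thesis using K by (simp add: field_simps)
qed

lemma K_convex_on_quadratic_growth_at_min:
  fixes h :: "'a::metric_space \<Rightarrow> ereal"
  assumes K: "K > 0" and conv: "K_convex_on K G h"
    and \<gamma>: "min_geodesic \<gamma> m x" "\<gamma> ` {0..1} \<subseteq> G" and "m \<in> G" "x \<in> G"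
    and min: "\<forall>y\<in>G. h m \<le> h y" and fin: "\<bar>h m\<bar> \<noteq> \<infinity>"
  shows "ereal ((dist x m)\<^sup>2) \<le> ereal (2 / K) * (h x - h m)"
proof (cases "h x = \<infinity>")
  case True
  then show ?thesis using K fin by auto
next
  case False
  obtain a where a: "h m = ereal a" using fin by (cases "h m") auto
  have "h m \<le> h x" using min \<open>x \<in> G\<close> by blast
  then obtain b where b: "h x = ereal b" using False a by (cases "h x") auto
  have "a \<le> (1 - t) * a + t * b - K / 2 * t * (1 - t) * (dist x m)\<^sup>2"
    if "0 \<le> t" "t \<le> 1" for t
  proof -
    have "\<gamma> t \<in> G" using \<gamma>(2) that by auto
    then have "h m \<le> h (\<gamma> t)" using min by blast
    also have "\<dots> \<le> ereal (1 - t) * h m + ereal t * h x - ereal (K / 2 * t * (1 - t) * (dist m x)\<^sup>2)"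
      using conv \<gamma>(1) \<open>m \<in> G\<close> \<open>x \<in> G\<close> that unfolding K_convex_on_def by simp
    finally show ?thesis by (simp add: a b dist_commute)
  qed
  then have "(dist x m)\<^sup>2 \<le> 2 / K * (b - a)"
    by (rule K_convex_ineq_at_min_imp_le[OF K])
  then show ?thesis by (simp add: a b)
qed

theorem proposition6p5:
  fixes G :: "'a::complete_space set" and K :: real
    and \<mu> :: "('a \<Rightarrow> ereal) measure" and m :: 'a
  assumes "alexandrov_space TYPE('a)"
    and "closed G" and "geodesically_convex G" and "separable_set G"
    and "K > 0" and "\<mu> \<in> PFK K G"
    and "m \<in> G" and "\<forall>x\<in>G. mean_fun \<mu> m \<le> mean_fun \<mu> x"
    and "\<forall>x\<in>G. mean_fun \<mu> x \<le> mean_fun \<mu> m \<longrightarrow> x = m"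
  shows "\<forall>x\<in>G. ereal ((dist x m)\<^sup>2) \<le> ereal (2 / K) * eint \<mu> (\<lambda>f. f x - f m)"
proof
  txt \<open>Closedness,
    separability, completeness and uniqueness of the minimizer only serve to produce \<open>m\<close>
    in the first place.\<close>
  fix x assume "x \<in> G"
  from \<open>\<mu> \<in> PFK K G\<close> obtain \<nu> where \<nu>: "space \<nu> = FK K G" "sets \<nu> = FK_sets K G" "\<mu> = completion \<nu>"
    and neg_fin: "\<forall>y\<in>G. (\<integral>\<^sup>+ f. e2ennreal (- f y) \<partial>\<mu>) < \<infinity>"
    and conv: "K_convex_on K G (mean_fun \<mu>)" and "\<exists>y\<in>G. mean_fun \<mu> y \<noteq> \<infinity>"
    unfolding PFK_def by blast
  have meas: "(\<lambda>f. f y) \<in> borel_measurable \<mu>" if "y \<in> G" for y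
    unfolding \<nu>(3) by (intro measurable_completion measurable_eval_FK[OF that \<nu>(1,2)])
  have "mean_fun \<mu> m \<noteq> \<infinity>" using assms(8) \<open>\<exists>y\<in>G. mean_fun \<mu> y \<noteq> \<infinity>\<close> by force
  moreover have "mean_fun \<mu> m \<noteq> -\<infinity>"
    unfolding mean_fun_def using neg_fin \<open>m \<in> G\<close> by (simp add: eint_neq_MInf)
  ultimately have "\<bar>mean_fun \<mu> m\<bar> \<noteq> \<infinity>" by auto
  have "(\<integral>\<^sup>+ f. e2ennreal (f m) \<partial>\<mu>) < \<infinity>"
    using \<open>mean_fun \<mu> m \<noteq> \<infinity>\<close> neg_fin \<open>m \<in> G\<close> by (simp add: mean_fun_def eint_neq_PInf_iff)
  then have "eint \<mu> (\<lambda>f. f x - f m) = mean_fun \<mu> x - mean_fun \<mu> m"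
    unfolding mean_fun_def using meas neg_fin \<open>x \<in> G\<close> \<open>m \<in> G\<close> by (intro eint_diff) auto
  moreover obtain \<gamma> where \<gamma>: "min_geodesic \<gamma> m x"
    using assms(1) unfolding alexandrov_space_def by blast
  moreover have "\<gamma> ` {0..1} \<subseteq> G"
    using assms(3) \<gamma> \<open>x \<in> G\<close> \<open>m \<in> G\<close> unfolding geodesically_convex_def by blast
  ultimately show "ereal ((dist x m)\<^sup>2) \<le> ereal (2 / K) * eint \<mu> (\<lambda>f. f x - f m)"
    using K_convex_on_quadratic_growth_at_min[OF \<open>K > 0\<close> conv] assms(7,8) \<open>x \<in> G\<close>
      \<open>\<bar>mean_fun \<mu> m\<bar> \<noteq> \<infinity>\<close> by simp
qed

end
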